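(* Let $\lambda$ be a nonzero complex constant and let $\psi(q,\bar q,z,\bar z)$ satisfy $$\psi_{q\bar q}\psi_{z\bar z}-\psi_{q\bar z}\psi_{\bar q z}=e^{\psi_q+\psi_{\bar q}}\bigl(\psi_{q\bar q}^2-\psi_{qq}\psi_{\bar q\bar q}\bigr)$$ together with the two constraints $$e^{\psi_{\bar q}}(\psi_{\bar q\bar q}+\psi_{q\bar q})=\lambda\,\psi_{q\bar z},\qquad \lambda\,e^{\psi_q}(\psi_{qq}+\psi_{q\bar q})=\psi_{\bar q z},$$ and assume $\psi_{q\bar q}\neq0$. Then $\psi_{z\bar z}=e^{\psi_q+\psi_{\bar q}}(\psi_{qq}+2\psi_{q\bar q}+\psi_{\bar q\bar q})$; equivalently, writing $q=x+iy$ with $x,y$ real, $\psi_{z\bar z}=e^{\psi_x}\psi_{xx}$ (the Boyer–Finley equation, in which $y$ enters only as a parameter).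
   Context: Subscripts denote partial (Wirtinger) derivatives with respect to $q,\bar q,z,\bar z$, and $\psi_x,\psi_{xx}$ partial derivatives with respect to the real variable $x=(q+\bar q)/2$. The two constraints arise from the partner-symmetry equations of the hyperbolic complex Monge–Ampère equation when the symmetry is the rotational one, $\varphi=i(z_1u_1-\bar z_1u_{\bar1})$, whose Legendre transform is $\Phi=i(q-\bar q)$. *)

theory Defs
  imports "HOL-Analysis.Analysis"
begin

text \<open>A point of C^2 is a pair (q, z). Functions are complex valued on C x C,
regarded as a real vector space of dimension 4.\<close>

definition pd :: "complex \<times> complex \<Rightarrow> (complex \<times> complex \<Rightarrow> complex) \<Rightarrow> complex \<times> complex \<Rightarrow> complex" where
  "pd v f p = vector_derivative (\<lambda>t::real. f (p + t *\<^sub>R v)) (at 0)"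

text \<open>Wirtinger derivatives with respect to q, conj q, z, conj z, and the real
partial derivative with respect to x = Re q.\<close>
definition dq :: "(complex \<times> complex \<Rightarrow> complex) \<Rightarrow> complex \<times> complex \<Rightarrow> complex" where
  "dq f p = (pd (1,0) f p - \<i> * pd (\<i>,0) f p) / 2"

definition dqb :: "(complex \<times> complex \<Rightarrow> complex) \<Rightarrow> complex \<times> complex \<Rightarrow> complex" where
  "dqb f p = (pd (1,0) f p + \<i> * pd (\<i>,0) f p) / 2"

definition dz :: "(complex \<times> complex \<Rightarrow> complex) \<Rightarrow> complex \<times> complex \<Rightarrow> complex" where
  "dz f p = (pd (0,1) f p - \<i> * pd (0,\<i>) f p) / 2"

definition dzb :: "(complex \<times> complex \<Rightarrow> complex) \<Rightarrow> complex \<times> complex \<Rightarrow> complex" where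
  "dzb f p = (pd (0,1) f p + \<i> * pd (0,\<i>) f p) / 2"

definition dx :: "(complex \<times> complex \<Rightarrow> complex) \<Rightarrow> complex \<times> complex \<Rightarrow> complex" where
  "dx f = pd (1,0) f"

definition real_dirs :: "(complex \<times> complex) set" where
  "real_dirs = {(1,0), (\<i>,0), (0,1), (0,\<i>)}"

definition C2_on :: "(complex \<times> complex) set \<Rightarrow> (complex \<times> complex \<Rightarrow> complex) \<Rightarrow> bool" where
  "C2_on U f \<longleftrightarrow> open U \<and> f differentiable_on U \<and>
     (\<forall>v\<in>real_dirs. pd v f differentiable_on U) \<and>
     (\<forall>v\<in>real_dirs. \<forall>w\<in>real_dirs. continuous_on U (pd w (pd v f)))"

end

theory Submission
  imports Defs
begin

(* The theorem is an algebraic consequence of the three equations at each point,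
   except for one analytic ingredient.

   Algebra: multiplying the two constraints gives
     psi_{q zb} psi_{qb z} = e^{psi_q + psi_qb} (psi_qq + psi_{q qb}) (psi_{qb qb} + psi_{q qb}),
   and substituting this into the Monge-Ampere type equation and cancelling the
   nonzero factor psi_{q qb} yields psi_{z zb} = e^{psi_q+psi_qb}(psi_qq + 2 psi_{q qb} + psi_{qb qb})
   (lemma boyer_finley_algebra; the constant lambda cancels).

   Analysis: expanding the Wirtinger derivatives in the real directions,
   psi_qq + 2 psi_{q qb} + psi_{qb qb} = psi_xx holds once the mixed real partials
   psi_{xy} and psi_{yx} agree.  The library has no Schwarz theorem for directional
   derivatives, so we prove one (pd_mixed_symmetric) from a second-difference
   estimate obtained by two applications of the mean value inequality. *)

lemma has_vector_derivative_along_line: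
  fixes G :: "complex \<times> complex \<Rightarrow> complex"
  assumes "(G has_derivative G') (at (y + s *\<^sub>R u))"
  shows "((\<lambda>t. G (y + t *\<^sub>R u)) has_vector_derivative G' u) (at s)"
proof -
  have line: "((\<lambda>t. y + t *\<^sub>R u) has_derivative (\<lambda>t. t *\<^sub>R u)) (at s)"
    by (auto intro!: derivative_eq_intros)
  have "((\<lambda>t. G (y + t *\<^sub>R u)) has_derivative (\<lambda>t. G' (t *\<^sub>R u))) (at s)"
    using has_derivative_compose[OF line, of G G'] assms by simp
  moreover have "\<And>t. G' (t *\<^sub>R u) = t *\<^sub>R G' u"
    using has_derivative_linear[OF assms] by (simp add: linear_scale)
  ultimately show ?thesis by (simp add: has_vector_derivative_def)
qed

lemma pd_has_derivative:
  fixes G :: "complex \<times> complex \<Rightarrow> complex"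
  assumes "(G has_derivative G') (at x)"
  shows "pd u G x = G' u"
  unfolding pd_def
  by (rule vector_derivative_at) (use has_vector_derivative_along_line[of G G' x 0 u] assms in simp)

lemma pd_along_line:
  fixes G :: "complex \<times> complex \<Rightarrow> complex"
  assumes "G differentiable at (y + s *\<^sub>R u)"
  shows "((\<lambda>t. G (y + t *\<^sub>R u)) has_vector_derivative pd u G (y + s *\<^sub>R u)) (at s)"
proof -
  obtain G' where "(G has_derivative G') (at (y + s *\<^sub>R u))"
    using assms unfolding differentiable_def by blast
  then show ?thesis
    using has_vector_derivative_along_line pd_has_derivative by metis
qed

lemma pd_linear_combination:
  fixes F G :: "complex \<times> complex \<Rightarrow> complex"
  assumes "F differentiable at p" "G differentiable at p"
  shows "pd w (\<lambda>x. a * F x + b * G x) p = a * pd w F p + b * pd w G p"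
proof -
  obtain F' where F': "(F has_derivative F') (at p)"
    using assms unfolding differentiable_def by blast
  obtain G' where G': "(G has_derivative G') (at p)"
    using assms unfolding differentiable_def by blast
  have "((\<lambda>x. a * F x + b * G x) has_derivative (\<lambda>h. a * F' h + b * G' h)) (at p)"
    by (auto intro!: derivative_eq_intros F' G')
  then show ?thesis
    using pd_has_derivative F' G' by metis
qed

lemma increment_near_constant_rate:
  fixes g g' :: "real \<Rightarrow> 'a::real_normed_vector"
  assumes h: "0 \<le> h"
    and der: "\<And>t. t \<in> {0..h} \<Longrightarrow> (g has_vector_derivative g' t) (at t within {0..h})"
    and close: "\<And>t. t \<in> {0..h} \<Longrightarrow> norm (g' t - c) \<le> e"
  shows "norm (g h - g 0 - h *\<^sub>R c) \<le> h * e"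
proof -
  have "((\<lambda>t. g t - t *\<^sub>R c) has_derivative (\<lambda>s. s *\<^sub>R (g' t - c))) (at t within {0..h})"
    if "t \<in> {0..h}" for t
    using der[OF that] unfolding has_vector_derivative_def
    by (auto intro!: derivative_eq_intros simp: scaleR_diff_right)
  moreover have "onorm (\<lambda>s. s *\<^sub>R (g' t - c)) \<le> e" if "t \<in> {0..h}" for t
    using close[OF that] onorm_scaleR_left[OF bounded_linear_ident, of "g' t - c"]
      onorm_id[where 'a=real] by simp
  ultimately have "norm ((g h - h *\<^sub>R c) - (g 0 - 0 *\<^sub>R c)) \<le> e * norm (h - 0)"
    using h by (intro differentiable_bound[where S="{0..h}"]) auto
  then show ?thesis using h by (simp add: algebra_simps)
qed

text \<open>Applied in both orders it forces the two mixed derivatives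
  to agree.\<close>

lemma second_difference_estimate:
  fixes F :: "complex \<times> complex \<Rightarrow> complex"
  assumes h: "0 \<le> h"
    and square: "\<And>s t. s \<in> {0..h} \<Longrightarrow> t \<in> {0..h} \<Longrightarrow>
        F differentiable at (p + s *\<^sub>R v + t *\<^sub>R w) \<and> pd v F differentiable at (p + s *\<^sub>R v + t *\<^sub>R w)
        \<and> norm (pd w (pd v F) (p + s *\<^sub>R v + t *\<^sub>R w) - c) \<le> e"
  shows "norm (F (p + h *\<^sub>R v + h *\<^sub>R w) - F (p + h *\<^sub>R v) - F (p + h *\<^sub>R w) + F p
            - (h * h) *\<^sub>R c) \<le> h * h * e"
proof -
  define g where "g = pd v F"
  define u where "u s = F (p + s *\<^sub>R v + h *\<^sub>R w) - F (p + s *\<^sub>R v)" for s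
  define u' where "u' s = g (p + s *\<^sub>R v + h *\<^sub>R w) - g (p + s *\<^sub>R v)" for s
  have u'_close: "norm (u' s - h *\<^sub>R c) \<le> h * e" if s: "s \<in> {0..h}" for s
  proof -
    have "norm (g (p + s *\<^sub>R v + h *\<^sub>R w) - g (p + s *\<^sub>R v + 0 *\<^sub>R w) - h *\<^sub>R c) \<le> h * e"
    proof (rule increment_near_constant_rate[OF h, of "\<lambda>t. g (p + s *\<^sub>R v + t *\<^sub>R w)"])
      fix t assume t: "t \<in> {0..h}"
      show "((\<lambda>t. g (p + s *\<^sub>R v + t *\<^sub>R w)) has_vector_derivative pd w g (p + s *\<^sub>R v + t *\<^sub>R w))
              (at t within {0..h})"
        using pd_along_line[of g "p + s *\<^sub>R v" t w] square[OF s t]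
        unfolding g_def by (simp add: has_vector_derivative_at_within)
      show "norm (pd w g (p + s *\<^sub>R v + t *\<^sub>R w) - c) \<le> e"
        using square[OF s t] unfolding g_def by simp
    qed
    then show ?thesis unfolding u'_def by simp
  qed
  have "norm (u h - u 0 - h *\<^sub>R (h *\<^sub>R c)) \<le> h * (h * e)"
  proof (rule increment_near_constant_rate[OF h, of u u'])
    fix s assume s: "s \<in> {0..h}"
    have "F differentiable at ((p + h *\<^sub>R w) + s *\<^sub>R v)" "F differentiable at (p + s *\<^sub>R v)"
      using square[OF s, of h] square[OF s, of 0] h by (simp_all add: add_ac)
    then have "((\<lambda>s. F ((p + h *\<^sub>R w) + s *\<^sub>R v) - F (p + s *\<^sub>R v)) has_vector_derivative
        (pd v F ((p + h *\<^sub>R w) + s *\<^sub>R v) - pd v F (p + s *\<^sub>R v))) (at s)"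
      by (intro has_vector_derivative_diff pd_along_line)
    then have "(u has_vector_derivative (pd v F ((p + h *\<^sub>R w) + s *\<^sub>R v) - pd v F (p + s *\<^sub>R v))) (at s)"
      unfolding u_def by (simp add: add_ac)
    then show "(u has_vector_derivative u' s) (at s within {0..h})"
      unfolding u'_def g_def by (simp add: add_ac has_vector_derivative_at_within)
    show "norm (u' s - h *\<^sub>R c) \<le> h * e" by (rule u'_close[OF s])
  qed
  then show ?thesis unfolding u_def by (simp add: algebra_simps)
qed

lemma square_in_ball:
  fixes p v w :: "complex \<times> complex"
  assumes "s \<in> {0..h}" "t \<in> {0..h}" "h * (norm v + norm w) < d"
  shows "dist (p + s *\<^sub>R v + t *\<^sub>R w) p < d"
proof -
  have "dist (p + s *\<^sub>R v + t *\<^sub>R w) p = norm (s *\<^sub>R v + t *\<^sub>R w)" by (simp add: dist_norm)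
  also have "\<dots> \<le> s * norm v + t * norm w"
    using assms norm_triangle_ineq[of "s *\<^sub>R v" "t *\<^sub>R w"] by simp
  also have "\<dots> \<le> h * norm v + h * norm w"
    using assms by (intro add_mono mult_right_mono) auto
  finally show ?thesis using assms by (simp add: algebra_simps)
qed

section \<open>Symmetry of mixed directional derivatives\<close>

lemma pd_mixed_symmetric:
  fixes F :: "complex \<times> complex \<Rightarrow> complex"
  assumes U: "open U" "p \<in> U"
    and dF: "\<forall>x\<in>U. F differentiable at x"
    and dv: "\<forall>x\<in>U. pd v F differentiable at x"
    and dw: "\<forall>x\<in>U. pd w F differentiable at x"
    and cont_vw: "isCont (pd w (pd v F)) p"
    and cont_wv: "isCont (pd v (pd w F)) p"
  shows "pd w (pd v F) p = pd v (pd w F) p"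
proof -
  define a where "a = pd w (pd v F) p"
  define b where "b = pd v (pd w F) p"
  have bound: "norm (a - b) \<le> 2 * e" if e: "e > 0" for e
  proof -
    obtain r where r: "r > 0" "ball p r \<subseteq> U" using U open_contains_ball by blast
    obtain d1 where d1: "d1 > 0" "\<And>x. dist x p < d1 \<Longrightarrow> dist (pd w (pd v F) x) a < e"
      using cont_vw e unfolding continuous_at_eps_delta a_def by blast
    obtain d2 where d2: "d2 > 0" "\<And>x. dist x p < d2 \<Longrightarrow> dist (pd v (pd w F) x) b < e"
      using cont_wv e unfolding continuous_at_eps_delta b_def by blast
    define \<delta> where "\<delta> = min r (min d1 d2)"
    define h where "h = \<delta> / (2 * (norm v + norm w + 1))"
    have \<delta>: "\<delta> > 0" using r d1 d2 unfolding \<delta>_def by simp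
    have h: "h > 0" using \<delta> unfolding h_def by (simp add: add_nonneg_pos)
    have "h * (norm v + norm w) \<le> h * (norm v + norm w + 1)" using h by simp
    also have "\<dots> = \<delta> / 2"
      using add_nonneg_pos[of "norm v + norm w" 1] unfolding h_def by (simp add: field_simps)
    finally have small: "h * (norm v + norm w) < \<delta>" using \<delta> by simp
    then have small': "h * (norm w + norm v) < \<delta>" by (simp add: add_ac)
    define D where "D = F (p + h *\<^sub>R v + h *\<^sub>R w) - F (p + h *\<^sub>R v) - F (p + h *\<^sub>R w) + F p"
    have Da: "norm (D - (h * h) *\<^sub>R a) \<le> h * h * e"
      unfolding D_def
    proof (rule second_difference_estimate)
      fix s t assume st: "s \<in> {0..h}" "t \<in> {0..h}"
      have near: "dist (p + s *\<^sub>R v + t *\<^sub>R w) p < \<delta>" by (rule square_in_ball[OF st small])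
      then have "p + s *\<^sub>R v + t *\<^sub>R w \<in> U" using r unfolding \<delta>_def by (auto simp: dist_commute)
      moreover have "dist (pd w (pd v F) (p + s *\<^sub>R v + t *\<^sub>R w)) a < e"
        using d1(2) near unfolding \<delta>_def by simp
      ultimately show "F differentiable at (p + s *\<^sub>R v + t *\<^sub>R w) \<and> pd v F differentiable at (p + s *\<^sub>R v + t *\<^sub>R w)
          \<and> norm (pd w (pd v F) (p + s *\<^sub>R v + t *\<^sub>R w) - a) \<le> e"
        using dF dv by (simp add: dist_norm)
    qed (use h in simp)
    have "D = F (p + h *\<^sub>R w + h *\<^sub>R v) - F (p + h *\<^sub>R w) - F (p + h *\<^sub>R v) + F p"
      unfolding D_def by (simp add: algebra_simps)
    moreover have "norm (\<dots> - (h * h) *\<^sub>R b) \<le> h * h * e"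
    proof (rule second_difference_estimate)
      fix s t assume st: "s \<in> {0..h}" "t \<in> {0..h}"
      have near: "dist (p + s *\<^sub>R w + t *\<^sub>R v) p < \<delta>" by (rule square_in_ball[OF st small'])
      then have "p + s *\<^sub>R w + t *\<^sub>R v \<in> U" using r unfolding \<delta>_def by (auto simp: dist_commute)
      moreover have "dist (pd v (pd w F) (p + s *\<^sub>R w + t *\<^sub>R v)) b < e"
        using d2(2) near unfolding \<delta>_def by simp
      ultimately show "F differentiable at (p + s *\<^sub>R w + t *\<^sub>R v) \<and> pd w F differentiable at (p + s *\<^sub>R w + t *\<^sub>R v)
          \<and> norm (pd v (pd w F) (p + s *\<^sub>R w + t *\<^sub>R v) - b) \<le> e"
        using dF dw by (simp add: dist_norm)
    qed (use h in simp)
    ultimately have Db: "norm (D - (h * h) *\<^sub>R b) \<le> h * h * e" by simp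
    have "(h * h) *\<^sub>R (a - b) = (D - (h * h) *\<^sub>R b) - (D - (h * h) *\<^sub>R a)"
      by (simp add: algebra_simps)
    then have "norm ((h * h) *\<^sub>R (a - b)) \<le> norm (D - (h * h) *\<^sub>R b) + norm (D - (h * h) *\<^sub>R a)"
      by (metis norm_triangle_ineq4)
    also have "\<dots> \<le> h * h * (2 * e)"
      using Da Db by simp
    finally show ?thesis using h by simp
  qed
  have "norm (a - b) \<le> 0"
    by (rule field_le_epsilon) (use bound[of "_ / 2"] in simp)
  then show ?thesis unfolding a_def b_def by simp
qed

lemma C2_on_mixed_symmetric:
  assumes "C2_on U F" "p \<in> U" "v \<in> real_dirs" "w \<in> real_dirs"
  shows "pd w (pd v F) p = pd v (pd w F) p"
proof -
  have U: "open U" and "F differentiable_on U"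
    and "\<And>v. v \<in> real_dirs \<Longrightarrow> pd v F differentiable_on U"
    and cont: "\<And>v w. v \<in> real_dirs \<Longrightarrow> w \<in> real_dirs \<Longrightarrow> continuous_on U (pd w (pd v F))"
    using assms(1) unfolding C2_on_def by auto
  with assms(2-4) show ?thesis
    by (intro pd_mixed_symmetric[OF U assms(2)])
       (simp_all add: differentiable_on_eq_differentiable_at continuous_on_eq_continuous_at)
qed

lemma dq_plus_dqb: "dq F p + dqb F p = dx F p"
  unfolding dx_def dq_def dqb_def by (simp add: field_simps)

text \<open>With \<open>F\<^sub>x = \<partial>\<^sub>x F\<close> and \<open>F\<^sub>y = \<partial>\<^sub>y F\<close> we have \<open>\<partial>\<^sub>q = (\<partial>\<^sub>x - i \<partial>\<^sub>y)/2\<close> and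
  \<open>\<partial>\<^sub>q\<^sub>b = (\<partial>\<^sub>x + i \<partial>\<^sub>y)/2\<close>, so \<open>F\<^sub>q\<^sub>q + 2 F\<^sub>q\<^sub>q\<^sub>b + F\<^sub>q\<^sub>b\<^sub>q\<^sub>b = (\<partial>\<^sub>q + \<partial>\<^sub>q\<^sub>b)\<^sup>2 F = F\<^sub>x\<^sub>x\<close>,
  provided \<open>F\<^sub>x\<^sub>y = F\<^sub>y\<^sub>x\<close>.\<close>

lemma wirtinger_square_sum:
  fixes F :: "complex \<times> complex \<Rightarrow> complex"
  assumes dx: "pd (1,0) F differentiable at p"
    and dy: "pd (\<i>,0) F differentiable at p"
    and sym: "pd (\<i>,0) (pd (1,0) F) p = pd (1,0) (pd (\<i>,0) F) p"
  shows "dq (dq F) p + 2 * dqb (dq F) p + dqb (dqb F) p = dx (dx F) p"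
proof -
  have dq_real: "dq F = (\<lambda>x. (1/2) * pd (1,0) F x + (- \<i>/2) * pd (\<i>,0) F x)"
    unfolding dq_def by (auto simp: field_simps)
  have dqb_real: "dqb F = (\<lambda>x. (1/2) * pd (1,0) F x + (\<i>/2) * pd (\<i>,0) F x)"
    unfolding dqb_def by (auto simp: field_simps)
  have L1: "\<And>w. pd w (dq F) p = (1/2) * pd w (pd (1,0) F) p + (- \<i>/2) * pd w (pd (\<i>,0) F) p"
    unfolding dq_real by (rule pd_linear_combination[OF dx dy])
  have L2: "\<And>w. pd w (dqb F) p = (1/2) * pd w (pd (1,0) F) p + (\<i>/2) * pd w (pd (\<i>,0) F) p"
    unfolding dqb_real by (rule pd_linear_combination[OF dx dy])
  show ?thesis
    unfolding dq_def[of "dq F"] dqb_def[of "dq F"] dqb_def[of "dqb F"] dx_def L1 L2 sym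
    by (simp add: field_simps)
qed

text \<open>Pointwise algebra: with \<open>A = \<psi>\<^sub>q\<^sub>q\<^sub>b \<noteq> 0\<close>, the two constraints give
  \<open>X Y = E (a + A)(b + A)\<close> for the cross terms \<open>X = \<psi>\<^sub>q\<^sub>z\<^sub>b\<close>, \<open>Y = \<psi>\<^sub>q\<^sub>b\<^sub>z\<close>, and the main
  equation then determines \<open>Z = \<psi>\<^sub>z\<^sub>z\<^sub>b\<close>.\<close>

lemma boyer_finley_algebra:
  fixes a A b X Y Z lam eq eqb :: "'a::field"
  assumes main: "A * Z - X * Y = (eq * eqb) * (A\<^sup>2 - a * b)"
    and con1: "eqb * (b + A) = lam * X"
    and con2: "lam * eq * (a + A) = Y"
    and A: "A \<noteq> 0"
  shows "Z = (eq * eqb) * (a + 2 * A + b)"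
proof -
  have "X * Y = eq * (lam * X) * (a + A)"
    unfolding con2[symmetric] by (simp add: algebra_simps)
  also have "\<dots> = (eq * eqb) * (a + A) * (b + A)"
    unfolding con1[symmetric] by (simp add: algebra_simps)
  finally have "X * Y = (eq * eqb) * (a + A) * (b + A)" .
  with main have "A * Z = A * ((eq * eqb) * (a + 2 * A + b))"
    by (simp add: algebra_simps power2_eq_square)
  with A show ?thesis by simp
qed

theorem mainTheorem6:
  fixes \<psi> :: "complex \<times> complex \<Rightarrow> complex"
    and lam :: complex
    and U :: "(complex \<times> complex) set"
  assumes lam: "lam \<noteq> 0"
    and smooth: "C2_on U \<psi>"
    and eq: "\<forall>p\<in>U. dqb (dq \<psi>) p * dzb (dz \<psi>) p - dzb (dq \<psi>) p * dz (dqb \<psi>) p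
               = exp (dq \<psi> p + dqb \<psi> p) *
                 ((dqb (dq \<psi>) p)\<^sup>2 - dq (dq \<psi>) p * dqb (dqb \<psi>) p)"
    and c1: "\<forall>p\<in>U. exp (dqb \<psi> p) * (dqb (dqb \<psi>) p + dqb (dq \<psi>) p) = lam * dzb (dq \<psi>) p"
    and c2: "\<forall>p\<in>U. lam * exp (dq \<psi> p) * (dq (dq \<psi>) p + dqb (dq \<psi>) p) = dz (dqb \<psi>) p"
    and nz: "\<forall>p\<in>U. dqb (dq \<psi>) p \<noteq> 0"
  shows "\<forall>p\<in>U. dzb (dz \<psi>) p
            = exp (dq \<psi> p + dqb \<psi> p) * (dq (dq \<psi>) p + 2 * dqb (dq \<psi>) p + dqb (dqb \<psi>) p)
          \<and> dzb (dz \<psi>) p = exp (dx \<psi> p) * dx (dx \<psi>) p"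
proof (intro ballI conjI)
  fix p assume p: "p \<in> U"
  show Z: "dzb (dz \<psi>) p
      = exp (dq \<psi> p + dqb \<psi> p) * (dq (dq \<psi>) p + 2 * dqb (dq \<psi>) p + dqb (dqb \<psi>) p)"
    unfolding exp_add
    by (rule boyer_finley_algebra[where X="dzb (dq \<psi>) p" and Y="dz (dqb \<psi>) p" and lam=lam])
       (use eq c1 c2 nz p in \<open>simp_all add: exp_add\<close>)
  have dirs: "(1,0) \<in> real_dirs" "(\<i>,0) \<in> real_dirs" by (auto simp: real_dirs_def)
  have "pd (1,0) \<psi> differentiable at p" "pd (\<i>,0) \<psi> differentiable at p"
    using smooth p dirs unfolding C2_on_def
    by (auto simp: differentiable_on_eq_differentiable_at)
  then have "dq (dq \<psi>) p + 2 * dqb (dq \<psi>) p + dqb (dqb \<psi>) p = dx (dx \<psi>) p"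
    using wirtinger_square_sum C2_on_mixed_symmetric[OF smooth p dirs] by blast
  with Z show "dzb (dz \<psi>) p = exp (dx \<psi> p) * dx (dx \<psi>) p"
    by (simp add: dq_plus_dqb)
qed

end
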